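(* In the setting described in the context (with $L=[0,1]$), let $q\in\{1,\dots,n\}$ and assume there exists $A\subseteq\mathcal C$ with $|A|=q$ and $\eta_q(A)=1$. Define $\mu^*:2^{\mathcal C}\to[0,1]$ by $\mu^*(\emptyset)=0$, $\mu^*(X)=\eta_q(X)$ if $0<|X|\le q$, and $\mu^*(X)=\max_{\emptyset\neq Y\subsetneq X,\ |Y|\le q}\eta_q(Y)$ if $|X|>q$. Then $\mu^*$ is the greatest (pointwise) among all $q$-maxitive capacities $\mu:2^{\mathcal C}\to[0,1]$ satisfying $\max_{1\le k\le N}|S_\mu(x^{(k)})-\alpha^{(k)}|=\Delta_q$.
   Context: Let $\mathcal C=\{1,\dots,n\}$ and $L=[0,1]$. A capacity is a map $\mu:2^{\mathcal C}\to[0,1]$ with $\mu(\emptyset)=0$, $\mu(\mathcal C)=1$, monotone for inclusion; it is $q$-maxitive if for all $X$ with $|X|>q$, $\mu(X)=\max_{Y\subsetneq X,\ |Y|\le q}\mu(Y)$. Sugeno integral: $S_\mu(x)=\max_{A\subseteq\mathcal C}\min(\min_{i\in A}x_i,\mu(A))$ with $\min_{i\in\emptyset}x_i=1$. Training data: $N$ pairs $(x^{(k)},\alpha^{(k)})$, $x^{(k)}\in[0,1]^n$, $\alpha^{(k)}\in[0,1]$. For nonempty $A$, $m_{k,A}=\min_{i\in A}x^{(k)}_i$. Write $t^+=\max(t,0)$. For $1\le i\le N$ and $0<|A|\le q$, let $\sigma_G(\alpha^{(i)},m_{l,A},\alpha^{(l)})=\min\big(\tfrac{(\alpha^{(i)}-\alpha^{(l)})^+}{2},(m_{l,A}-\alpha^{(l)})^+\big)$,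 $\delta_{i,A}=\max\big((\alpha^{(i)}-m_{i,A})^+,\max_{1\le l\le N}\sigma_G(\alpha^{(i)},m_{l,A},\alpha^{(l)})\big)$, $\delta_i=\min_{0<|A|\le q}\delta_{i,A}$, and $\Delta_q=\max_{1\le i\le N}\delta_i$. For $0<|A|\le q$, $\eta_q(A)=\min_{1\le k\le N}\big(m_{k,A}\to_G\min(\alpha^{(k)}+\Delta_q,1)\big)$, where $a\to_G b=1$ if $a\le b$ and $a\to_G b=b$ otherwise. *)

theory Defs
  imports Complex_Main
begin

text \<open>Criteria are C = {1..n}; training data: x k i (k in {1..N}, i in {1..n}) and alpha k.
  Capacities are functions on nat set, only their values on subsets of {1..n} matter.\<close>

definition pos :: "real \<Rightarrow> real" where
  "pos t = max t 0"

definition is_capacity :: "nat \<Rightarrow> (nat set \<Rightarrow> real) \<Rightarrow> bool" where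
  "is_capacity n \<mu> \<longleftrightarrow>
     (\<forall>X. X \<subseteq> {1..n} \<longrightarrow> 0 \<le> \<mu> X \<and> \<mu> X \<le> 1) \<and>
     \<mu> {} = 0 \<and> \<mu> {1..n} = 1 \<and>
     (\<forall>X Y. X \<subseteq> Y \<and> Y \<subseteq> {1..n} \<longrightarrow> \<mu> X \<le> \<mu> Y)"

definition q_maxitive :: "nat \<Rightarrow> nat \<Rightarrow> (nat set \<Rightarrow> real) \<Rightarrow> bool" where
  "q_maxitive n q \<mu> \<longleftrightarrow>
     (\<forall>X. X \<subseteq> {1..n} \<and> card X > q \<longrightarrow>
        \<mu> X = Max {\<mu> Y | Y. Y \<subset> X \<and> card Y \<le> q})"

definition minx :: "(nat \<Rightarrow> real) \<Rightarrow> nat set \<Rightarrow> real" where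
  "minx xv A = (if A = {} then 1 else Min (xv ` A))"

definition sugeno :: "nat \<Rightarrow> (nat set \<Rightarrow> real) \<Rightarrow> (nat \<Rightarrow> real) \<Rightarrow> real" where
  "sugeno n \<mu> xv = Max ((\<lambda>A. min (minx xv A) (\<mu> A)) ` Pow {1..n})"

definition mkA :: "(nat \<Rightarrow> nat \<Rightarrow> real) \<Rightarrow> nat \<Rightarrow> nat set \<Rightarrow> real" where
  "mkA x k A = Min ((\<lambda>i. x k i) ` A)"

definition sigmaG :: "real \<Rightarrow> real \<Rightarrow> real \<Rightarrow> real" where
  "sigmaG ai m al = min (pos (ai - al) / 2) (pos (m - al))"

definition delta_iA :: "nat \<Rightarrow> (nat \<Rightarrow> nat \<Rightarrow> real) \<Rightarrow> (nat \<Rightarrow> real) \<Rightarrow> nat \<Rightarrow> nat set \<Rightarrow> real" where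
  "delta_iA N x \<alpha> i A = max (pos (\<alpha> i - mkA x i A))
      (Max ((\<lambda>l. sigmaG (\<alpha> i) (mkA x l A) (\<alpha> l)) ` {1..N}))"

definition delta_i :: "nat \<Rightarrow> nat \<Rightarrow> nat \<Rightarrow> (nat \<Rightarrow> nat \<Rightarrow> real) \<Rightarrow> (nat \<Rightarrow> real) \<Rightarrow> nat \<Rightarrow> real" where
  "delta_i n N q x \<alpha> i = Min ((\<lambda>A. delta_iA N x \<alpha> i A) ` {A. A \<subseteq> {1..n} \<and> 0 < card A \<and> card A \<le> q})"

definition Delta_q :: "nat \<Rightarrow> nat \<Rightarrow> nat \<Rightarrow> (nat \<Rightarrow> nat \<Rightarrow> real) \<Rightarrow> (nat \<Rightarrow> real) \<Rightarrow> real" where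
  "Delta_q n N q x \<alpha> = Max ((\<lambda>i. delta_i n N q x \<alpha> i) ` {1..N})"

definition impG :: "real \<Rightarrow> real \<Rightarrow> real" where
  "impG a b = (if a \<le> b then 1 else b)"

definition eta_q :: "nat \<Rightarrow> nat \<Rightarrow> nat \<Rightarrow> (nat \<Rightarrow> nat \<Rightarrow> real) \<Rightarrow> (nat \<Rightarrow> real) \<Rightarrow> nat set \<Rightarrow> real" where
  "eta_q n N q x \<alpha> A = Min ((\<lambda>k. impG (mkA x k A) (min (\<alpha> k + Delta_q n N q x \<alpha>) 1)) ` {1..N})"

definition mu_star :: "nat \<Rightarrow> nat \<Rightarrow> nat \<Rightarrow> (nat \<Rightarrow> nat \<Rightarrow> real) \<Rightarrow> (nat \<Rightarrow> real) \<Rightarrow> nat set \<Rightarrow> real" where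
  "mu_star n N q x \<alpha> X =
     (if X = {} then 0
      else if card X \<le> q then eta_q n N q x \<alpha> X
      else Max {eta_q n N q x \<alpha> Y | Y. Y \<noteq> {} \<and> Y \<subset> X \<and> card Y \<le> q})"

definition fit_error :: "nat \<Rightarrow> nat \<Rightarrow> (nat \<Rightarrow> nat \<Rightarrow> real) \<Rightarrow> (nat \<Rightarrow> real) \<Rightarrow> (nat set \<Rightarrow> real) \<Rightarrow> real" where
  "fit_error n N x \<alpha> \<mu> = Max ((\<lambda>k. \<bar>sugeno n \<mu> (x k) - \<alpha> k\<bar>) ` {1..N})"

definition admissible :: "nat \<Rightarrow> nat \<Rightarrow> nat \<Rightarrow> (nat \<Rightarrow> nat \<Rightarrow> real) \<Rightarrow> (nat \<Rightarrow> real) \<Rightarrow> (nat set \<Rightarrow> real) \<Rightarrow> bool" where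
  "admissible n N q x \<alpha> \<mu> \<longleftrightarrow>
     is_capacity n \<mu> \<and> q_maxitive n q \<mu> \<and> fit_error n N x \<alpha> \<mu> = Delta_q n N q x \<alpha>"

end

theory Submission
  imports Defs
begin

(*
  delta_{i,A} <= e says precisely that giving A the value alpha_i - e is compatible with
  error e: through A the Sugeno integral at x^(i) reaches alpha_i - e, while at every other
  x^(l) the term min(m_{l,A}, alpha_i - e) stays below alpha_l + e. The Sugeno integral of a
  q-maxitive capacity is attained on a set of at most q criteria, so a q-maxitive capacity
  with error e has delta_i <= e for every i, i.e. its error is at least Delta_q.

  Conversely, eta_q(A) is the Goedel residuum: the largest c <= 1 with
  min(m_{k,A}, c) <= alpha_k + Delta_q for all k. Hence mu* fits with error at most Delta_q,
  and every q-maxitive capacity of error Delta_q lies below eta_q on sets of size at most q,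
  hence below mu*, the q-maxitive extension of eta_q. The set A with eta_q(A) = 1 is needed only to
  get mu*(C) = 1.
*)

lemma pos_le_iff: "0 \<le> e \<Longrightarrow> pos t \<le> e \<longleftrightarrow> t \<le> e"
  by (simp add: pos_def)

lemma sigmaG_le_iff:
  assumes "0 \<le> e"
  shows "sigmaG a m b \<le> e \<longleftrightarrow> min m (a - e) \<le> b + e"
  using assms unfolding sigmaG_def pos_def by (auto simp: min_le_iff_disj)

lemma le_impG_iff: "c \<le> 1 \<Longrightarrow> c \<le> impG a b \<longleftrightarrow> min a c \<le> b"
  by (auto simp: impG_def)

lemma minx_eq_mkA: "A \<noteq> {} \<Longrightarrow> minx (x k) A = mkA x k A"
  unfolding minx_def mkA_def by simp

lemma mkA_antimono:
  assumes "A \<subseteq> B" "A \<noteq> {}" "finite B"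
  shows "mkA x k B \<le> mkA x k A"
  using assms unfolding mkA_def by (auto intro!: Min_antimono)

lemma minx_antimono:
  assumes "A \<subseteq> B" "A \<noteq> {}" "finite B"
  shows "minx xv B \<le> minx xv A"
  using assms unfolding minx_def by (auto intro!: Min_antimono)

lemma sugeno_ge: "A \<subseteq> {1..n} \<Longrightarrow> min (minx xv A) (\<mu> A) \<le> sugeno n \<mu> xv"
  unfolding sugeno_def by (intro Max_ge) auto

lemma sugeno_le_iff:
  "sugeno n \<mu> xv \<le> c \<longleftrightarrow> (\<forall>A\<subseteq>{1..n}. min (minx xv A) (\<mu> A) \<le> c)"
  unfolding sugeno_def by (subst Max_le_iff) auto

lemma sugeno_attained: "\<exists>A\<subseteq>{1..n}. sugeno n \<mu> xv = min (minx xv A) (\<mu> A)"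
proof -
  have "sugeno n \<mu> xv \<in> (\<lambda>A. min (minx xv A) (\<mu> A)) ` Pow {1..n}"
    unfolding sugeno_def by (intro Max_in) auto
  then show ?thesis by auto
qed

lemma q_maxitive_witness:
  assumes "q_maxitive n q \<mu>" "X \<subseteq> {1..n}"
  shows "\<exists>Y\<subseteq>X. card Y \<le> q \<and> \<mu> Y = \<mu> X"
proof (cases "card X \<le> q")
  case True
  then show ?thesis by blast
next
  case False
  let ?S = "{\<mu> Y | Y. Y \<subset> X \<and> card Y \<le> q}"
  have "finite X" using assms(2) finite_subset by blast
  have "?S \<subseteq> \<mu> ` Pow X" by auto
  then have fin: "finite ?S" by (rule finite_subset) (simp add: \<open>finite X\<close>)
  have ne: "?S \<noteq> {}" using False by force
  have "\<mu> X = Max ?S" using assms False unfolding q_maxitive_def by simp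
  then have "\<mu> X \<in> ?S" using Max_in[OF fin ne] by simp
  then show ?thesis by auto
qed

lemma q_maxitive_sugeno_witness:
  assumes "\<mu> {} = 0" "q_maxitive n q \<mu>" "0 < t" "t \<le> sugeno n \<mu> xv"
  shows "\<exists>A\<subseteq>{1..n}. A \<noteq> {} \<and> card A \<le> q \<and> t \<le> minx xv A \<and> t \<le> \<mu> A"
proof -
  obtain B where B: "B \<subseteq> {1..n}" "t \<le> minx xv B" "t \<le> \<mu> B"
    using sugeno_attained[of n \<mu> xv] assms(4) by (metis min.bounded_iff)
  obtain A where A: "A \<subseteq> B" "card A \<le> q" "\<mu> A = \<mu> B"
    using q_maxitive_witness[OF assms(2) B(1)] by blast
  have "A \<noteq> {}" using A(3) B(3) assms(1,3) by auto
  moreover have "minx xv B \<le> minx xv A"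
    using minx_antimono[OF A(1) \<open>A \<noteq> {}\<close>] B(1) finite_subset by blast
  ultimately show ?thesis using A B by (intro exI[of _ A]) auto
qed

locale training_data =
  fixes n N q :: nat and x :: "nat \<Rightarrow> nat \<Rightarrow> real" and \<alpha> :: "nat \<Rightarrow> real"
  assumes n_pos: "1 \<le> n" and N_pos: "1 \<le> N" and q_pos: "1 \<le> q"
    and x_nonneg: "\<And>k i. k \<in> {1..N} \<Longrightarrow> i \<in> {1..n} \<Longrightarrow> 0 \<le> x k i"
    and \<alpha>_range: "\<And>k. k \<in> {1..N} \<Longrightarrow> 0 \<le> \<alpha> k \<and> \<alpha> k \<le> 1"
begin

abbreviation "\<Delta> \<equiv> Delta_q n N q x \<alpha>"
abbreviation "\<eta> \<equiv> eta_q n N q x \<alpha>"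
abbreviation "\<mu>\<^sub>q \<equiv> mu_star n N q x \<alpha>"

lemma fit_error_le_iff:
  "fit_error n N x \<alpha> \<mu> \<le> e \<longleftrightarrow> (\<forall>k\<in>{1..N}. \<bar>sugeno n \<mu> (x k) - \<alpha> k\<bar> \<le> e)"
  unfolding fit_error_def using N_pos by (subst Max_le_iff) auto

lemma fit_error_ge: "k \<in> {1..N} \<Longrightarrow> \<bar>sugeno n \<mu> (x k) - \<alpha> k\<bar> \<le> fit_error n N x \<alpha> \<mu>"
  using fit_error_le_iff by blast

lemma delta_iA_le_iff:
  assumes "0 \<le> e"
  shows "delta_iA N x \<alpha> i A \<le> e \<longleftrightarrow>
    \<alpha> i - e \<le> mkA x i A \<and> (\<forall>l\<in>{1..N}. min (mkA x l A) (\<alpha> i - e) \<le> \<alpha> l + e)"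
  unfolding delta_iA_def using N_pos assms
  by (auto simp: Max_le_iff pos_le_iff sigmaG_le_iff)

lemma delta_i_le_delta_iA:
  "A \<subseteq> {1..n} \<Longrightarrow> A \<noteq> {} \<Longrightarrow> card A \<le> q \<Longrightarrow> delta_i n N q x \<alpha> i \<le> delta_iA N x \<alpha> i A"
  unfolding delta_i_def by (intro Min_le) (simp_all add: card_gt_0_iff finite_subset)

lemma delta_i_attained:
  "\<exists>A\<subseteq>{1..n}. A \<noteq> {} \<and> card A \<le> q \<and> delta_i n N q x \<alpha> i = delta_iA N x \<alpha> i A"
proof -
  let ?small = "{A. A \<subseteq> {1..n} \<and> 0 < card A \<and> card A \<le> q}"
  have fin: "finite ?small" by simp
  have "{1} \<in> ?small" using n_pos q_pos by simp
  then have ne: "(\<lambda>A. delta_iA N x \<alpha> i A) ` ?small \<noteq> {}" by blast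
  have "delta_i n N q x \<alpha> i \<in> (\<lambda>A. delta_iA N x \<alpha> i A) ` ?small"
    unfolding delta_i_def using Min_in[OF finite_imageI[OF fin] ne] .
  then obtain A where "A \<in> ?small" "delta_i n N q x \<alpha> i = delta_iA N x \<alpha> i A"
    by blast
  moreover have "A \<noteq> {}" using \<open>A \<in> ?small\<close> by auto
  ultimately show ?thesis by blast
qed

lemma Delta_q_le_iff: "\<Delta> \<le> e \<longleftrightarrow> (\<forall>i\<in>{1..N}. delta_i n N q x \<alpha> i \<le> e)"
  unfolding Delta_q_def using N_pos by (subst Max_le_iff) auto

lemma delta_i_le_Delta_q: "i \<in> {1..N} \<Longrightarrow> delta_i n N q x \<alpha> i \<le> \<Delta>"
  using Delta_q_le_iff by blast

lemma Delta_q_nonneg: "0 \<le> \<Delta>"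
proof -
  obtain A where "delta_i n N q x \<alpha> 1 = delta_iA N x \<alpha> 1 A"
    using delta_i_attained by blast
  then have "0 \<le> delta_i n N q x \<alpha> 1"
    by (simp add: delta_iA_def pos_def)
  then show ?thesis using delta_i_le_Delta_q[of 1] N_pos by simp
qed

lemma delta_i_le_fit_error:
  assumes "\<mu> {} = 0" "q_maxitive n q \<mu>" "i \<in> {1..N}"
  shows "delta_i n N q x \<alpha> i \<le> fit_error n N x \<alpha> \<mu>"
proof -
  define e where "e = fit_error n N x \<alpha> \<mu>"
  have fit: "\<bar>sugeno n \<mu> (x l) - \<alpha> l\<bar> \<le> e" if "l \<in> {1..N}" for l
    unfolding e_def using fit_error_ge that .
  then have "0 \<le> e" using assms(3) by force
  obtain A where A: "A \<subseteq> {1..n}" "A \<noteq> {}" "card A \<le> q" "\<alpha> i - e \<le> mkA x i A"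
    and below: "\<forall>l\<in>{1..N}. min (mkA x l A) (\<alpha> i - e) \<le> \<alpha> l + e"
  proof (cases "\<alpha> i - e \<le> 0")
    case True
    have "0 \<le> x i 1" using x_nonneg[OF assms(3)] n_pos by simp
    then have "\<alpha> i - e \<le> mkA x i {1}" using True by (simp add: mkA_def)
    moreover have "min (mkA x l {1}) (\<alpha> i - e) \<le> \<alpha> l + e" if "l \<in> {1..N}" for l
      using True \<alpha>_range[OF that] \<open>0 \<le> e\<close> by linarith
    ultimately show ?thesis using n_pos q_pos by (intro that[of "{1}"]) auto
  next
    case False
    have "\<alpha> i - e \<le> sugeno n \<mu> (x i)" using fit[OF assms(3)] by linarith
    then obtain A where A: "A \<subseteq> {1..n}" "A \<noteq> {}" "card A \<le> q"
        "\<alpha> i - e \<le> minx (x i) A" "\<alpha> i - e \<le> \<mu> A"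
      using q_maxitive_sugeno_witness[OF assms(1,2)] False by (metis not_le)
    have "min (mkA x l A) (\<alpha> i - e) \<le> \<alpha> l + e" if "l \<in> {1..N}" for l
    proof -
      have "min (mkA x l A) (\<alpha> i - e) \<le> min (minx (x l) A) (\<mu> A)"
        using A(5) minx_eq_mkA[OF A(2)] by (simp add: min.coboundedI2)
      also have "\<dots> \<le> sugeno n \<mu> (x l)" using sugeno_ge[OF A(1)] .
      finally show ?thesis using fit[OF that] by linarith
    qed
    then show ?thesis using that A minx_eq_mkA[OF A(2)] by simp
  qed
  then have "delta_iA N x \<alpha> i A \<le> e"
    using delta_iA_le_iff[OF \<open>0 \<le> e\<close>] by blast
  then show ?thesis
    unfolding e_def using delta_i_le_delta_iA[OF A(1-3), of i] by linarith
qed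

theorem Delta_q_le_fit_error:
  "\<mu> {} = 0 \<Longrightarrow> q_maxitive n q \<mu> \<Longrightarrow> \<Delta> \<le> fit_error n N x \<alpha> \<mu>"
  using delta_i_le_fit_error Delta_q_le_iff by blast

lemma le_eta_q_iff:
  "c \<le> 1 \<Longrightarrow> c \<le> \<eta> A \<longleftrightarrow> (\<forall>k\<in>{1..N}. min (mkA x k A) c \<le> \<alpha> k + \<Delta>)"
  unfolding eta_q_def using N_pos by (subst Min_ge_iff) (auto simp: le_impG_iff)

lemma eta_q_le_one: "\<eta> A \<le> 1"
proof -
  have "\<eta> A \<le> impG (mkA x 1 A) (min (\<alpha> 1 + \<Delta>) 1)"
    unfolding eta_q_def using N_pos by (intro Min_le) auto
  also have "\<dots> \<le> 1" by (simp add: impG_def)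
  finally show ?thesis .
qed

lemma eta_q_nonneg: "0 \<le> \<eta> A"
  using le_eta_q_iff[of 0 A] \<alpha>_range Delta_q_nonneg by force

lemma min_mkA_eta_q_le: "k \<in> {1..N} \<Longrightarrow> min (mkA x k A) (\<eta> A) \<le> \<alpha> k + \<Delta>"
  using le_eta_q_iff[OF eta_q_le_one] by blast

lemma eta_q_mono:
  assumes "A \<subseteq> B" "A \<noteq> {}" "B \<subseteq> {1..n}"
  shows "\<eta> A \<le> \<eta> B"
proof -
  have mkA_le: "mkA x k B \<le> mkA x k A" for k
    using mkA_antimono[OF assms(1,2)] assms(3) finite_subset by blast
  have "min (mkA x k B) (\<eta> A) \<le> \<alpha> k + \<Delta>" if "k \<in> {1..N}" for k
  proof -
    have "min (mkA x k B) (\<eta> A) \<le> min (mkA x k A) (\<eta> A)"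
      using mkA_le by (rule min.mono) simp
    then show ?thesis using min_mkA_eta_q_le[OF that, of A] by linarith
  qed
  then show ?thesis using le_eta_q_iff[OF eta_q_le_one] by blast
qed

lemma mu_star_empty [simp]: "\<mu>\<^sub>q {} = 0"
  by (simp add: mu_star_def)

lemma mu_star_small: "X \<noteq> {} \<Longrightarrow> card X \<le> q \<Longrightarrow> \<mu>\<^sub>q X = \<eta> X"
  by (simp add: mu_star_def)

lemma mu_star_large:
  assumes "X \<subseteq> {1..n}" "q < card X"
  defines "S \<equiv> {\<eta> Y | Y. Y \<noteq> {} \<and> Y \<subset> X \<and> card Y \<le> q}"
  shows "\<mu>\<^sub>q X = Max S" and "finite S" and "S \<noteq> {}"
proof -
  have "X \<noteq> {}" using assms(2) by auto
  then show "\<mu>\<^sub>q X = Max S" unfolding S_def mu_star_def using assms(2) by simp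
  have "finite X" using assms(1) finite_subset by blast
  have "S \<subseteq> \<eta> ` Pow X" unfolding S_def by auto
  then show "finite S" by (rule finite_subset) (simp add: \<open>finite X\<close>)
  obtain a where "a \<in> X" using \<open>X \<noteq> {}\<close> by blast
  moreover have "X \<noteq> {a}" using assms(2) q_pos by auto
  ultimately have "{a} \<subset> X" by blast
  then show "S \<noteq> {}" unfolding S_def using q_pos by auto
qed

lemma mu_star_attained:
  assumes "X \<subseteq> {1..n}" "X \<noteq> {}"
  shows "\<exists>Y\<subseteq>X. Y \<noteq> {} \<and> card Y \<le> q \<and> \<mu>\<^sub>q X = \<eta> Y"
proof (cases "card X \<le> q")
  case True
  then show ?thesis using assms(2) mu_star_small by auto
next
  case False
  then have "q < card X" by simp
  note large = mu_star_large[OF assms(1) this]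
  have "\<mu>\<^sub>q X \<in> {\<eta> Y | Y. Y \<noteq> {} \<and> Y \<subset> X \<and> card Y \<le> q}"
    unfolding large(1) using large(2,3) by (rule Max_in)
  then show ?thesis by auto
qed

lemma eta_q_le_mu_star:
  assumes "X \<subseteq> {1..n}" "Y \<subseteq> X" "Y \<noteq> {}" "card Y \<le> q"
  shows "\<eta> Y \<le> \<mu>\<^sub>q X"
proof (cases "card X \<le> q")
  case True
  have "X \<noteq> {}" using assms(2,3) by auto
  then have "\<mu>\<^sub>q X = \<eta> X" using True mu_star_small by simp
  then show ?thesis using eta_q_mono[OF assms(2,3,1)] by simp
next
  case False
  then have "q < card X" by simp
  note large = mu_star_large[OF assms(1) this]
  have "Y \<noteq> X" using False assms(4) by auto
  then have "\<eta> Y \<in> {\<eta> Y | Y. Y \<noteq> {} \<and> Y \<subset> X \<and> card Y \<le> q}"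
    using assms(2-4) by auto
  then show ?thesis unfolding large(1) using large(2) by (rule Max_ge[rotated])
qed

lemma mu_star_range: "X \<subseteq> {1..n} \<Longrightarrow> 0 \<le> \<mu>\<^sub>q X \<and> \<mu>\<^sub>q X \<le> 1"
  using mu_star_attained[of X] eta_q_nonneg eta_q_le_one
  by (cases "X = {}") auto

lemma mu_star_mono:
  assumes "X \<subseteq> Y" "Y \<subseteq> {1..n}"
  shows "\<mu>\<^sub>q X \<le> \<mu>\<^sub>q Y"
proof (cases "X = {}")
  case True
  then show ?thesis using mu_star_range[OF assms(2)] by simp
next
  case False
  moreover have "X \<subseteq> {1..n}" using assms by auto
  ultimately obtain Z where "Z \<subseteq> X" "Z \<noteq> {}" "card Z \<le> q" "\<mu>\<^sub>q X = \<eta> Z"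
    using mu_star_attained by blast
  then show ?thesis using eta_q_le_mu_star[OF assms(2)] assms(1) by auto
qed

lemma mu_star_q_maxitive: "q_maxitive n q \<mu>\<^sub>q"
  unfolding q_maxitive_def
proof (intro allI impI)
  fix X assume "X \<subseteq> {1..n} \<and> q < card X"
  then have X: "X \<subseteq> {1..n}" "q < card X" by auto
  then have "X \<noteq> {}" by auto
  let ?S = "{\<mu>\<^sub>q Y | Y. Y \<subset> X \<and> card Y \<le> q}"
  have "finite X" using X finite_subset by auto
  have "?S \<subseteq> \<mu>\<^sub>q ` Pow X" by auto
  then have "finite ?S" by (rule finite_subset) (simp add: \<open>finite X\<close>)
  moreover have "y \<le> \<mu>\<^sub>q X" if "y \<in> ?S" for y
    using that X mu_star_mono by auto
  moreover have "\<mu>\<^sub>q X \<in> ?S"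
  proof -
    obtain Z where Z: "Z \<subseteq> X" "Z \<noteq> {}" "card Z \<le> q" "\<mu>\<^sub>q X = \<eta> Z"
      using mu_star_attained[OF X(1) \<open>X \<noteq> {}\<close>] by blast
    then have "Z \<subset> X" "\<mu>\<^sub>q X = \<mu>\<^sub>q Z" using X mu_star_small by auto
    then show ?thesis using Z(3) by auto
  qed
  ultimately show "\<mu>\<^sub>q X = Max ?S" by (intro Max_eqI[symmetric])
qed

lemma mu_star_is_capacity:
  assumes "A \<subseteq> {1..n}" "card A = q" "\<eta> A = 1"
  shows "is_capacity n \<mu>\<^sub>q"
proof -
  have "A \<noteq> {}" using assms(2) q_pos by auto
  then have "1 \<le> \<mu>\<^sub>q {1..n}"
    using eta_q_le_mu_star[of "{1..n}" A] assms by simp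
  then have "\<mu>\<^sub>q {1..n} = 1" using mu_star_range[of "{1..n}"] by simp
  then show ?thesis
    unfolding is_capacity_def using mu_star_range mu_star_mono by simp
qed

lemma sugeno_mu_star_le:
  assumes k: "k \<in> {1..N}"
  shows "sugeno n \<mu>\<^sub>q (x k) \<le> \<alpha> k + \<Delta>"
  unfolding sugeno_le_iff
proof (intro allI impI)
  fix B assume B: "B \<subseteq> {1..n}"
  show "min (minx (x k) B) (\<mu>\<^sub>q B) \<le> \<alpha> k + \<Delta>"
  proof (cases "B = {}")
    case True
    then show ?thesis using \<alpha>_range[OF k] Delta_q_nonneg by (simp add: minx_def)
  next
    case False
    then obtain Z where Z: "Z \<subseteq> B" "Z \<noteq> {}" "card Z \<le> q" "\<mu>\<^sub>q B = \<eta> Z"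
      using mu_star_attained[OF B] by blast
    have "finite B" using B finite_subset by auto
    then have "minx (x k) B \<le> mkA x k Z"
      using minx_antimono[OF Z(1,2), of "x k"] minx_eq_mkA[OF Z(2)] by simp
    then have "min (minx (x k) B) (\<mu>\<^sub>q B) \<le> min (mkA x k Z) (\<eta> Z)"
      using Z(4) by (simp add: min.mono)
    then show ?thesis using min_mkA_eta_q_le[OF k, of Z] by linarith
  qed
qed

lemma sugeno_mu_star_ge:
  assumes k: "k \<in> {1..N}"
  shows "\<alpha> k - \<Delta> \<le> sugeno n \<mu>\<^sub>q (x k)"
proof -
  obtain A where A: "A \<subseteq> {1..n}" "A \<noteq> {}" "card A \<le> q"
    and "delta_i n N q x \<alpha> k = delta_iA N x \<alpha> k A"
    using delta_i_attained by blast
  then have "delta_iA N x \<alpha> k A \<le> \<Delta>" using delta_i_le_Delta_q[OF k] by simp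
  then have reached: "\<alpha> k - \<Delta> \<le> mkA x k A"
    and below: "\<forall>l\<in>{1..N}. min (mkA x l A) (\<alpha> k - \<Delta>) \<le> \<alpha> l + \<Delta>"
    using delta_iA_le_iff[OF Delta_q_nonneg] by auto
  have "\<alpha> k - \<Delta> \<le> 1" using \<alpha>_range[OF k] Delta_q_nonneg by linarith
  then have "\<alpha> k - \<Delta> \<le> \<eta> A" using le_eta_q_iff below by blast
  then have "\<alpha> k - \<Delta> \<le> min (minx (x k) A) (\<mu>\<^sub>q A)"
    using reached mu_star_small[OF A(2,3)] minx_eq_mkA[OF A(2)] by simp
  also have "\<dots> \<le> sugeno n \<mu>\<^sub>q (x k)" by (rule sugeno_ge[OF A(1)])
  finally show ?thesis .
qed

theorem fit_error_mu_star: "fit_error n N x \<alpha> \<mu>\<^sub>q = \<Delta>"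
proof (rule antisym)
  show "fit_error n N x \<alpha> \<mu>\<^sub>q \<le> \<Delta>"
  proof (unfold fit_error_le_iff, intro ballI)
    fix k assume k: "k \<in> {1..N}"
    show "\<bar>sugeno n \<mu>\<^sub>q (x k) - \<alpha> k\<bar> \<le> \<Delta>"
      using sugeno_mu_star_le[OF k] sugeno_mu_star_ge[OF k] by (auto simp: abs_le_iff)
  qed
  show "\<Delta> \<le> fit_error n N x \<alpha> \<mu>\<^sub>q"
    using Delta_q_le_fit_error mu_star_q_maxitive by simp
qed

theorem le_mu_star:
  assumes cap: "is_capacity n \<mu>" and qmax: "q_maxitive n q \<mu>"
    and fit: "fit_error n N x \<alpha> \<mu> \<le> \<Delta>" and X: "X \<subseteq> {1..n}"
  shows "\<mu> X \<le> \<mu>\<^sub>q X"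
proof -
  have le_eta: "\<mu> Y \<le> \<eta> Y" if Y: "Y \<subseteq> {1..n}" "Y \<noteq> {}" for Y
  proof -
    have "min (mkA x k Y) (\<mu> Y) \<le> \<alpha> k + \<Delta>" if k: "k \<in> {1..N}" for k
    proof -
      have "min (mkA x k Y) (\<mu> Y) \<le> sugeno n \<mu> (x k)"
        using sugeno_ge[OF Y(1), of "x k" \<mu>] minx_eq_mkA[OF Y(2)] by simp
      also have "\<dots> \<le> \<alpha> k + \<Delta>" using fit_error_ge[OF k, of \<mu>] fit by linarith
      finally show ?thesis .
    qed
    moreover have "\<mu> Y \<le> 1" using cap Y(1) unfolding is_capacity_def by simp
    ultimately show ?thesis using le_eta_q_iff by simp
  qed
  obtain Y where Y: "Y \<subseteq> X" "card Y \<le> q" "\<mu> Y = \<mu> X"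
    using q_maxitive_witness[OF qmax X] by blast
  show ?thesis
  proof (cases "Y = {}")
    case True
    then have "\<mu> X = 0" using Y(3) cap unfolding is_capacity_def by simp
    then show ?thesis using mu_star_range[OF X] by simp
  next
    case False
    have "\<mu> X \<le> \<eta> Y" using le_eta[of Y] Y(1,3) X False by simp
    also have "\<dots> \<le> \<mu>\<^sub>q X" using eta_q_le_mu_star[OF X Y(1) False Y(2)] .
    finally show ?thesis .
  qed
qed

end

theorem corollary2:
  fixes n N q :: nat and x :: "nat \<Rightarrow> nat \<Rightarrow> real" and \<alpha> :: "nat \<Rightarrow> real"
  assumes "1 \<le> n" and "1 \<le> N"
    and "\<forall>k\<in>{1..N}. \<forall>i\<in>{1..n}. 0 \<le> x k i \<and> x k i \<le> 1"
    and "\<forall>k\<in>{1..N}. 0 \<le> \<alpha> k \<and> \<alpha> k \<le> 1"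
    and "1 \<le> q" and "q \<le> n"
    and "\<exists>A. A \<subseteq> {1..n} \<and> card A = q \<and> eta_q n N q x \<alpha> A = 1"
  shows "admissible n N q x \<alpha> (mu_star n N q x \<alpha>) \<and>
         (\<forall>\<mu>. admissible n N q x \<alpha> \<mu> \<longrightarrow>
               (\<forall>X. X \<subseteq> {1..n} \<longrightarrow> \<mu> X \<le> mu_star n N q x \<alpha> X))"
proof -
  interpret training_data n N q x \<alpha>
    using assms(1-5) by unfold_locales auto
  obtain A where "A \<subseteq> {1..n}" "card A = q" "eta_q n N q x \<alpha> A = 1"
    using assms(7) by blast
  then show ?thesis
    unfolding admissible_def
    using mu_star_is_capacity mu_star_q_maxitive fit_error_mu_star le_mu_star by auto
qed

end
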